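(* Let $\mathcal{B}^*$ be the three-receiver unicast index coding problem described in the context, with equivalent single unicast side information graph $G^*$ and underlying undirected graph $G^*_u$. Then $$\beta^*_{\mathcal{B}^*}(1)=\bar{\chi}_f(G^*_u)=\bar{\chi}(G^*_u)=7,$$ where $\bar{\chi}_f$ and $\bar{\chi}$ denote the fractional clique cover number and the clique cover number, respectively.
   Context: Index coding model. A unicast index coding problem has $n$ receivers $u_1,\dots,u_n$ and $N$ messages $\mathbf{x}_1,\dots,\mathbf{x}_N$, each a vector in $\mathcal{A}^m$ for a finite alphabet $\mathcal{A}$ and a positive integer $m$ (the message length; all messages have the same length). Receiver $u_i$ demands $\mathbf{x}_j$, $j\in W_i$, and knows $\mathbf{x}_j$, $j\in K_i$, as side information, where $W_i,K_i\subseteq[N]$, $W_i\cap K_i=\emptyset$, the $W_i$ are pairwise disjoint and every message is demanded by exactly one receiver. An index code consists of an encoder mapping $(\mathbf{x}_1,\dots,\mathbf{x}_N)$ to a codeword $\mathbf{c}\in\mathcal{A}^\ell$, subsets $R_i\subseteq[\ell]$ (receiver $u_i$ observes only $\mathbf{c}_{R_i}$), and decoders at each $u_i$ mapping $(\mathbf{c}_{R_i},\mathbf{x}_{K_i})$ to $\mathbf{x}_{W_i}$. It is valid if every receiver decodes its demand correctly for all message values. Its broadcast rate is $\beta=\ell/m$. The locality at $u_i$ is $r_i=|R_i|/(m|W_i|)$ and the locality of the code is $r=\max_i r_i$. For a problem $\mathcal{B}$, $\beta^*_{\mathcal{B}}(r)$ is the infimum of broadcast rates of all valid index codes, over all message lengths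 $m\ge1$, with locality at most $r$. The problem $\mathcal{B}^*$: three receivers $u_1,u_2,u_3$ and 12 messages with $W_1=\{1,2,3,4\}$, $W_2=\{5,6,7,8\}$, $W_3=\{9,10,11,12\}$, $K_1=\{5,6,9,10\}$, $K_2=\{1,2,9,11\}$, $K_3=\{1,3,5,7\}$. $G^*$ is the directed graph on $[12]$ with a directed edge $(a,b)$ iff $b\in K_i$ where $a\in W_i$. $G^*_u$ is the undirected graph on $[12]$ with $\{a,b\}$ an edge iff both $(a,b)$ and $(b,a)$ are edges of $G^*$. *)

theory Defs
  imports Complex_Main
begin

text \<open>A problem has receivers 1..n and messages 1..N; receiver i demands the messages
  in W i and knows the messages in K i.\<close>

definition msgs :: "'a set \<Rightarrow> nat \<Rightarrow> nat \<Rightarrow> (nat \<Rightarrow> 'a list) set" where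
  "msgs A N m = {x. \<forall>j. (j \<in> {1..N} \<longrightarrow> length (x j) = m \<and> set (x j) \<subseteq> A)
                       \<and> (j \<notin> {1..N} \<longrightarrow> x j = [])}"

definition restrict_msgs :: "(nat \<Rightarrow> 'a list) \<Rightarrow> nat set \<Rightarrow> nat \<Rightarrow> 'a list" where
  "restrict_msgs x S = (\<lambda>j. if j \<in> S then x j else [])"

text \<open>An index code: encoder E producing a codeword of length l over A, observed
  positions R i \<subseteq> {0..<l} (the positions of the codeword, 0-based) for receiver i,
  and decoders D i that map (c restricted to R i, side information) to the demanded
  messages.\<close>
definition valid_index_code ::
  "'a set \<Rightarrow> nat \<Rightarrow> nat \<Rightarrow> (nat \<Rightarrow> nat set) \<Rightarrow> (nat \<Rightarrow> nat set) \<Rightarrow> nat \<Rightarrow> nat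
   \<Rightarrow> ((nat \<Rightarrow> 'a list) \<Rightarrow> 'a list) \<Rightarrow> (nat \<Rightarrow> nat set)
   \<Rightarrow> (nat \<Rightarrow> 'a list \<Rightarrow> (nat \<Rightarrow> 'a list) \<Rightarrow> nat \<Rightarrow> 'a list) \<Rightarrow> bool" where
  "valid_index_code A n N W K m l E R D \<longleftrightarrow>
     (\<forall>x\<in>msgs A N m. length (E x) = l \<and> set (E x) \<subseteq> A) \<and>
     (\<forall>i\<in>{1..n}. R i \<subseteq> {0..<l}) \<and>
     (\<forall>i\<in>{1..n}. \<forall>x\<in>msgs A N m. \<forall>j\<in>W i.
        D i (nths (E x) (R i)) (restrict_msgs x (K i)) j = x j)"

definition locality_at :: "nat \<Rightarrow> (nat \<Rightarrow> nat set) \<Rightarrow> (nat \<Rightarrow> nat set) \<Rightarrow> nat \<Rightarrow> real" where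
  "locality_at m W R i = real (card (R i)) / (real m * real (card (W i)))"

definition beta_star ::
  "'a set \<Rightarrow> nat \<Rightarrow> nat \<Rightarrow> (nat \<Rightarrow> nat set) \<Rightarrow> (nat \<Rightarrow> nat set) \<Rightarrow> real \<Rightarrow> real" where
  "beta_star A n N W K r = Inf {real l / real m | m l E R D.
      m \<ge> 1 \<and> valid_index_code A n N W K m l E R D \<and>
      (\<forall>i\<in>{1..n}. locality_at m W R i \<le> r)}"

definition is_clique :: "'v set \<Rightarrow> ('v \<Rightarrow> 'v \<Rightarrow> bool) \<Rightarrow> 'v set \<Rightarrow> bool" where
  "is_clique V Adj C \<longleftrightarrow> C \<subseteq> V \<and> C \<noteq> {} \<and> (\<forall>a\<in>C. \<forall>b\<in>C. a \<noteq> b \<longrightarrow> Adj a b)"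

definition clique_cover_number :: "'v set \<Rightarrow> ('v \<Rightarrow> 'v \<Rightarrow> bool) \<Rightarrow> nat" where
  "clique_cover_number V Adj = (LEAST k. \<exists>\<C>. finite \<C> \<and> card \<C> = k \<and>
      (\<forall>C\<in>\<C>. is_clique V Adj C) \<and> \<Union>\<C> = V)"

definition frac_clique_cover_number :: "'v set \<Rightarrow> ('v \<Rightarrow> 'v \<Rightarrow> bool) \<Rightarrow> real" where
  "frac_clique_cover_number V Adj = Inf {(\<Sum>C\<in>{C. is_clique V Adj C}. w C) | w.
      (\<forall>C. w C \<ge> 0) \<and> (\<forall>v\<in>V. (\<Sum>C\<in>{C. is_clique V Adj C \<and> v \<in> C}. w C) \<ge> 1)}"

definition Wstar :: "nat \<Rightarrow> nat set" where
  "Wstar i = (if i = 1 then {1,2,3,4} else if i = 2 then {5,6,7,8}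
              else if i = 3 then {9,10,11,12} else {})"

definition Kstar :: "nat \<Rightarrow> nat set" where
  "Kstar i = (if i = 1 then {5,6,9,10} else if i = 2 then {1,2,9,11}
              else if i = 3 then {1,3,5,7} else {})"

definition Gstar_edge :: "nat \<Rightarrow> nat \<Rightarrow> bool" where
  "Gstar_edge a b \<longleftrightarrow> (\<exists>i\<in>{1..3::nat}. a \<in> Wstar i \<and> b \<in> Kstar i)"

definition Gstar_u_adj :: "nat \<Rightarrow> nat \<Rightarrow> bool" where
  "Gstar_u_adj a b \<longleftrightarrow> Gstar_edge a b \<and> Gstar_edge b a"

end

theory Submission
  imports Defs "HOL-Library.FuncSet"
begin

(*
  With locality at most one, receiver i reads at most m |W_i| codeword symbols, and these must
  determine its m |W_i| demanded symbols given its side information. By counting, its observation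
  map is then a bijection onto all words, so every symbol the receiver reads is a function of the
  messages in W_i and K_i alone; a symbol read by two receivers is a function of what both of
  them demand or know. Message 4 is unknown to receivers 2 and 3, and messages 6 and 8 are unknown
  to receiver 3. Hence receiver 1 needs m symbols read by no other receiver, receiver 2 needs 2m
  symbols not read by receiver 3, and receiver 3 reads 4m symbols: the codeword has length at
  least 7m. The code (x1+x5+x9, x2+x6, x3+x10, x7+x11, x4, x8, x12), with addition modulo |A|
  on the alphabet, attains this bound for m = 1.

  The only triangle of G*_u is {1, 5, 9}. The clique cover {1,5,9}, {2,6}, {3,10}, {7,11}, {4},
  {8}, {12} and the fractional independent set with weight 1 on 4, 8, 12, weight 1/3 on 1, 5, 9
  and weight 1/2 elsewhere both have value 7, so weak LP duality pins both cover numbers to 7.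
*)

section \<open>Index codes with locality one\<close>

lemma nths_eq_iff_nth_eq:
  assumes "length xs = length ys" "S \<subseteq> {0..<length xs}"
  shows "nths xs S = nths ys S \<longleftrightarrow> (\<forall>p\<in>S. xs ! p = ys ! p)"
proof -
  have nths_eq_map: "nths zs S = map ((!) zs) (nths [0..<length xs] S)"
    if "length zs = length xs" for zs by (metis that map_nth nths_map)
  have "set (nths [0..<length xs] S) = S"
    using assms(2) by (force simp: set_nths)
  then show ?thesis
    using nths_eq_map[of xs] nths_eq_map[of ys] assms(1) by (simp add: map_eq_conv)
qed

definition words :: "'a set \<Rightarrow> nat \<Rightarrow> 'a list set" where
  "words A k = {xs. set xs \<subseteq> A \<and> length xs = k}"

lemma finite_words: "finite A \<Longrightarrow> finite (words A k)"
  unfolding words_def by (rule finite_lists_length_eq)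

lemma card_words: "finite A \<Longrightarrow> card (words A k) = card A ^ k"
  unfolding words_def by (rule card_lists_length_eq)

lemma msgs_iff:
  "x \<in> msgs A N m \<longleftrightarrow> (\<forall>j\<in>{1..N}. x j \<in> words A m) \<and> (\<forall>j. j \<notin> {1..N} \<longrightarrow> x j = [])"
  unfolding msgs_def words_def by auto

lemma msgs_nonempty: "A \<noteq> {} \<Longrightarrow> msgs A N m \<noteq> {}"
proof -
  assume "A \<noteq> {}"
  then obtain a where "a \<in> A" by blast
  then have "(\<lambda>j. if j \<in> {1..N} then replicate m a else []) \<in> msgs A N m"
    unfolding msgs_def by auto
  then show ?thesis by blast
qed

lemma msgs_1D:
  assumes "x \<in> msgs A N 1" "j \<in> {1..N}"
  shows "x j = [hd (x j)]" "hd (x j) \<in> A"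
proof -
  have "x j \<in> words A 1" using assms unfolding msgs_iff by blast
  then obtain a where "x j = [a]" "a \<in> A" unfolding words_def by (auto simp: length_Suc_conv)
  then show "x j = [hd (x j)]" "hd (x j) \<in> A" by simp_all
qed

lemma if_in_msgs:
  assumes "x \<in> msgs A N m" "x' \<in> msgs A N m"
  shows "(\<lambda>j. if j \<in> S then x j else x' j) \<in> msgs A N m"
  using assms unfolding msgs_def mem_Collect_eq by (intro allI) (metis (full_types))

definition variants ::
  "(nat \<Rightarrow> 'a list) set \<Rightarrow> (nat \<Rightarrow> 'a list) \<Rightarrow> nat set \<Rightarrow> (nat \<Rightarrow> 'a list) set" where
  "variants U x T = {y \<in> U. \<forall>j. j \<notin> T \<longrightarrow> y j = x j}"

lemma card_variants_msgs:
  assumes "finite A" "x \<in> msgs A N m" "T \<subseteq> {1..N}"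
  shows "card (variants (msgs A N m) x T) = card A ^ (m * card T)"
proof -
  have "bij_betw (\<lambda>y. restrict y T) (variants (msgs A N m) x T) (\<Pi>\<^sub>E j\<in>T. words A m)"
  proof (rule bij_betw_byWitness[where f' = "\<lambda>f j. if j \<in> T then f j else x j"])
    show "\<forall>y\<in>variants (msgs A N m) x T. (\<lambda>j. if j \<in> T then restrict y T j else x j) = y"
      unfolding variants_def by auto
    show "\<forall>f\<in>\<Pi>\<^sub>E j\<in>T. words A m. restrict (\<lambda>j. if j \<in> T then f j else x j) T = f"
      by (auto simp: PiE_iff extensional_def)
    show "(\<lambda>y. restrict y T) ` variants (msgs A N m) x T \<subseteq> (\<Pi>\<^sub>E j\<in>T. words A m)"
      using assms(3) unfolding variants_def msgs_iff by (auto simp: restrict_PiE_iff)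
    show "(\<lambda>f j. if j \<in> T then f j else x j) ` (\<Pi>\<^sub>E j\<in>T. words A m) \<subseteq> variants (msgs A N m) x T"
      using assms(2,3) unfolding variants_def msgs_iff by (auto simp: PiE_iff)
  qed
  then have "card (variants (msgs A N m) x T) = card (\<Pi>\<^sub>E j\<in>T. words A m)"
    by (rule bij_betw_same_card)
  also have "\<dots> = card A ^ (m * card T)"
    using finite_subset[OF assms(3)] by (simp add: card_PiE card_words[OF assms(1)] power_mult)
  finally show ?thesis .
qed

definition depends_only_on ::
  "(nat \<Rightarrow> 'a list) set \<Rightarrow> ((nat \<Rightarrow> 'a list) \<Rightarrow> 'a list) \<Rightarrow> nat \<Rightarrow> nat set \<Rightarrow> bool" where
  "depends_only_on U E p S \<longleftrightarrow> (\<forall>x\<in>U. \<forall>x'\<in>U. (\<forall>j\<in>S. x j = x' j) \<longrightarrow> E x ! p = E x' ! p)"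

lemma depends_only_onD:
  "depends_only_on U E p S \<Longrightarrow> x \<in> U \<Longrightarrow> x' \<in> U \<Longrightarrow> (\<And>j. j \<in> S \<Longrightarrow> x j = x' j)
    \<Longrightarrow> E x ! p = E x' ! p"
  unfolding depends_only_on_def by blast

lemma depends_only_on_mono:
  "depends_only_on U E p S \<Longrightarrow> S \<subseteq> S' \<Longrightarrow> depends_only_on U E p S'"
  unfolding depends_only_on_def by blast

lemma depends_only_on_Int:
  assumes "depends_only_on (msgs A N m) E p S" "depends_only_on (msgs A N m) E p S'"
  shows "depends_only_on (msgs A N m) E p (S \<inter> S')"
  unfolding depends_only_on_def
proof (intro ballI impI)
  fix x x' assume x: "x \<in> msgs A N m" and x': "x' \<in> msgs A N m"
    and agree: "\<forall>j\<in>S \<inter> S'. x j = x' j"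
  define z where "z j = (if j \<in> S then x j else x' j)" for j
  have z: "z \<in> msgs A N m" unfolding z_def using x x' by (rule if_in_msgs)
  have "E x ! p = E z ! p"
    by (rule depends_only_onD[OF assms(1) x z]) (simp add: z_def)
  also have "\<dots> = E x' ! p"
    by (rule depends_only_onD[OF assms(2) z x']) (use agree in \<open>simp add: z_def\<close>)
  finally show "E x ! p = E x' ! p" .
qed

locale receiver =
  fixes A :: "'a set" and N m l :: nat and E :: "(nat \<Rightarrow> 'a list) \<Rightarrow> 'a list"
    and R :: "nat set" and D :: "'a list \<Rightarrow> (nat \<Rightarrow> 'a list) \<Rightarrow> nat \<Rightarrow> 'a list"
    and W K :: "nat set"
  assumes finite_alphabet: "finite A" and two_le_card_alphabet: "2 \<le> card A"
    and codeword: "\<And>x. x \<in> msgs A N m \<Longrightarrow> length (E x) = l \<and> set (E x) \<subseteq> A"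
    and observed_positions: "R \<subseteq> {0..<l}"
    and decodes: "\<And>x j. x \<in> msgs A N m \<Longrightarrow> j \<in> W \<Longrightarrow> D (nths (E x) R) (restrict_msgs x K) j = x j"
    and demands: "W \<subseteq> {1..N}"
    and demands_disjoint_side_info: "W \<inter> K = {}"
begin

lemma observed_in_words:
  assumes "x \<in> msgs A N m" "S \<subseteq> R"
  shows "nths (E x) S \<in> words A (card S)"
proof -
  have "{i. i < length (E x) \<and> i \<in> S} = S"
    using codeword[OF assms(1)] observed_positions assms(2) by auto
  then show ?thesis
    using codeword[OF assms(1)] set_nths_subset[of "E x" S] unfolding words_def
    by (auto simp: length_nths)
qed

lemma nths_codeword_eq_iff:
  assumes "x \<in> msgs A N m" "x' \<in> msgs A N m" "S \<subseteq> R"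
  shows "nths (E x) S = nths (E x') S \<longleftrightarrow> (\<forall>p\<in>S. E x ! p = E x' ! p)"
  using codeword[OF assms(1)] codeword[OF assms(2)] observed_positions assms(3)
  by (intro nths_eq_iff_nth_eq) auto

lemma agree_on_demands:
  assumes "x \<in> msgs A N m" "x' \<in> msgs A N m" "nths (E x) R = nths (E x') R"
    and "\<forall>k\<in>K. x k = x' k" and "j \<in> W"
  shows "x j = x' j"
proof -
  have "restrict_msgs x K = restrict_msgs x' K"
    using assms(4) unfolding restrict_msgs_def by auto
  then show ?thesis
    using decodes[OF assms(1,5)] decodes[OF assms(2,5)] assms(3) by simp
qed

lemma inj_on_observed_variants:
  assumes "x \<in> msgs A N m" "T \<subseteq> W"
  shows "inj_on (\<lambda>y. nths (E y) R) (variants (msgs A N m) x T)"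
proof (rule inj_onI)
  fix y y' assume y: "y \<in> variants (msgs A N m) x T" and y': "y' \<in> variants (msgs A N m) x T"
    and observed: "nths (E y) R = nths (E y') R"
  have outside: "y j = y' j" if "j \<notin> T" for j
    using y y' that unfolding variants_def by simp
  have "y j = y' j" for j
  proof (cases "j \<in> W")
    case True
    have "\<forall>k\<in>K. y k = y' k" using outside assms(2) demands_disjoint_side_info by blast
    with y y' observed True show ?thesis
      unfolding variants_def by (blast intro: agree_on_demands)
  qed (use outside assms(2) in blast)
  then show "y = y'" ..
qed

(* The positions in P are constant on the variants of x on W - S, while the observation still
   separates these variants; so the positions in R - P alone take card A ^ (m * card (W - S))
   distinct values. *)
lemma card_demands_le_card_observed_diff:
  assumes "\<forall>p\<in>R \<inter> P. depends_only_on (msgs A N m) E p S"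
  shows "m * card (W - S) \<le> card (R - P)"
proof -
  obtain x where x: "x \<in> msgs A N m"
    using msgs_nonempty[of A N m] two_le_card_alphabet by fastforce
  let ?V = "variants (msgs A N m) x (W - S)"
  have inj: "inj_on (\<lambda>y. nths (E y) (R - P)) ?V"
  proof (rule inj_onI)
    fix y y' assume y: "y \<in> ?V" and y': "y' \<in> ?V" and eq: "nths (E y) (R - P) = nths (E y') (R - P)"
    have msgs: "y \<in> msgs A N m" "y' \<in> msgs A N m" using y y' unfolding variants_def by auto
    have "y j = y' j" if "j \<in> S" for j using y y' that unfolding variants_def by auto
    then have "\<forall>p\<in>R \<inter> P. E y ! p = E y' ! p"
      using assms msgs by (blast intro: depends_only_onD)
    moreover have "\<forall>p\<in>R - P. E y ! p = E y' ! p"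
      using eq nths_codeword_eq_iff[OF msgs, of "R - P"] by blast
    ultimately have "nths (E y) R = nths (E y') R"
      using nths_codeword_eq_iff[OF msgs order_refl] by blast
    then show "y = y'"
      using inj_on_observed_variants[OF x, of "W - S"] y y' by (auto dest: inj_onD)
  qed
  have "(\<lambda>y. nths (E y) (R - P)) ` ?V \<subseteq> words A (card (R - P))"
    using observed_in_words unfolding variants_def by blast
  then have "card ?V \<le> card (words A (card (R - P)))"
    using inj finite_words[OF finite_alphabet] by (intro card_inj_on_le)
  moreover have "card ?V = card A ^ (m * card (W - S))"
    by (rule card_variants_msgs[OF finite_alphabet x]) (use demands in blast)
  ultimately have "card A ^ (m * card (W - S)) \<le> card A ^ card (R - P)"
    by (simp add: card_words[OF finite_alphabet])
  then show ?thesis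
    using two_le_card_alphabet by (simp add: power_le_imp_le_exp)
qed

lemma observed_variants_eq_words:
  assumes "card R \<le> m * card W" "x \<in> msgs A N m"
  shows "(\<lambda>y. nths (E y) R) ` variants (msgs A N m) x W = words A (card R)"
proof -
  let ?obs = "\<lambda>y. nths (E y) R"
  let ?V = "variants (msgs A N m) x W"
  have inj: "inj_on ?obs ?V" by (rule inj_on_observed_variants[OF assms(2) order_refl])
  have sub: "?obs ` ?V \<subseteq> words A (card R)"
    using observed_in_words unfolding variants_def by blast
  have "card (words A (card R)) \<le> card A ^ (m * card W)"
    using assms(1) two_le_card_alphabet
    by (simp add: card_words[OF finite_alphabet] power_increasing)
  also have "\<dots> = card (?obs ` ?V)"
    using demands by (simp add: card_image[OF inj] card_variants_msgs[OF finite_alphabet assms(2)])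
  finally show ?thesis
    using card_seteq[OF finite_words[OF finite_alphabet] sub] by blast
qed

(* The observation of x is that of some variant z of x' on W; as x and x' share their side
   information, decoding gives z = x' on W, hence z = x'. *)
lemma observed_depends_only_on_demands_and_side_info:
  assumes small: "card R \<le> m * card W" and p: "p \<in> R"
  shows "depends_only_on (msgs A N m) E p (W \<union> K)"
  unfolding depends_only_on_def
proof (intro ballI impI)
  fix x x' assume x: "x \<in> msgs A N m" and x': "x' \<in> msgs A N m"
    and agree: "\<forall>j\<in>W \<union> K. x j = x' j"
  have "nths (E x) R \<in> (\<lambda>y. nths (E y) R) ` variants (msgs A N m) x' W"
    using observed_variants_eq_words[OF small x'] observed_in_words[OF x order_refl] by simp
  then obtain z where z: "z \<in> variants (msgs A N m) x' W" and obs_z: "nths (E z) R = nths (E x) R"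
    by (auto simp: eq_commute)
  have z_msgs: "z \<in> msgs A N m" using z unfolding variants_def by simp
  have "z = x'"
  proof
    fix j show "z j = x' j"
    proof (cases "j \<in> W")
      case True
      have "\<forall>k\<in>K. z k = x k"
        using z agree demands_disjoint_side_info unfolding variants_def by auto
      then have "z j = x j" using agree_on_demands[OF z_msgs x obs_z _ True] by simp
      then show ?thesis using agree True by simp
    qed (use z in \<open>simp add: variants_def\<close>)
  qed
  then have "nths (E x) R = nths (E x') R" using obs_z by simp
  then show "E x ! p = E x' ! p" using nths_codeword_eq_iff[OF x x' order_refl] p by blast
qed

end

lemma receiver_of_valid_index_code:
  assumes "valid_index_code A n N W K m l E R D" "finite A" "2 \<le> card A" "i \<in> {1..n}"
    and "W i \<subseteq> {1..N}" "W i \<inter> K i = {}"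
  shows "receiver A N m l E (R i) (D i) (W i) (K i)"
  using assms unfolding valid_index_code_def by unfold_locales blast+

lemma locality_at_le_1_iff:
  assumes "0 < m" "0 < card (W i)"
  shows "locality_at m W R i \<le> 1 \<longleftrightarrow> card (R i) \<le> m * card (W i)"
proof -
  have "0 < real m * real (card (W i))" using assms by simp
  then show ?thesis
    unfolding locality_at_def by (simp add: divide_le_eq_1 flip: of_nat_mult)
qed

lemma shared_position_depends_only_on:
  assumes "receiver A N m l E R1 D1 W1 K1" "receiver A N m l E R2 D2 W2 K2"
    and "card R1 \<le> m * card W1" "card R2 \<le> m * card W2" "p \<in> R1" "p \<in> R2"
  shows "depends_only_on (msgs A N m) E p ((W1 \<union> K1) \<inter> (W2 \<union> K2))"
  using receiver.observed_depends_only_on_demands_and_side_info[OF assms(1,3,5)]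
    receiver.observed_depends_only_on_demands_and_side_info[OF assms(2,4,6)]
  by (rule depends_only_on_Int)

lemma card_Un3_eq_card_diffs:
  assumes "finite X" "finite Y" "finite Z"
  shows "card (X \<union> Y \<union> Z) = card (X - (Y \<union> Z)) + card (Y - Z) + card Z"
proof -
  have "card (X \<union> Y \<union> Z) = card ((X - (Y \<union> Z)) \<union> ((Y - Z) \<union> Z))"
    by (rule arg_cong[where f = card]) blast
  also have "\<dots> = card (X - (Y \<union> Z)) + card ((Y - Z) \<union> Z)"
    by (rule card_Un_disjoint) (use assms in auto)
  also have "card ((Y - Z) \<union> Z) = card (Y - Z) + card Z"
    by (rule card_Un_disjoint) (use assms in auto)
  finally show ?thesis by simp
qed

lemma beta_star_eqI:
  assumes "m0 \<ge> 1" "valid_index_code A n N W K m0 l0 E0 R0 D0"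
    and "\<forall>i\<in>{1..n}. locality_at m0 W R0 i \<le> r" and "real l0 = b * real m0"
    and "\<And>m l E R D. m \<ge> 1 \<Longrightarrow> valid_index_code A n N W K m l E R D \<Longrightarrow>
      \<forall>i\<in>{1..n}. locality_at m W R i \<le> r \<Longrightarrow> b * real m \<le> real l"
  shows "beta_star A n N W K r = b"
  unfolding beta_star_def
proof (rule cInf_eq_minimum)
  have "b = real l0 / real m0" using assms(1,4) by simp
  then show "b \<in> {real l / real m | m l E R D. m \<ge> 1 \<and> valid_index_code A n N W K m l E R D \<and>
      (\<forall>i\<in>{1..n}. locality_at m W R i \<le> r)}"
    using assms(1-3) by blast
next
  fix s assume "s \<in> {real l / real m | m l E R D. m \<ge> 1 \<and> valid_index_code A n N W K m l E R D \<and>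
      (\<forall>i\<in>{1..n}. locality_at m W R i \<le> r)}"
  then obtain m l E R D where "s = real l / real m" "m \<ge> 1" "valid_index_code A n N W K m l E R D"
      "\<forall>i\<in>{1..n}. locality_at m W R i \<le> r"
    by blast
  with assms(5) show "b \<le> s" by (simp add: le_divide_eq)
qed

lemma finite_set_cancellative_addition:
  assumes "finite A" "A \<noteq> {}"
  obtains add sub :: "'a \<Rightarrow> 'a \<Rightarrow> 'a"
  where "\<And>a b. a \<in> A \<Longrightarrow> b \<in> A \<Longrightarrow> add a b \<in> A"
    and "\<And>a b. add a b = add b a"
    and "\<And>a b. a \<in> A \<Longrightarrow> b \<in> A \<Longrightarrow> sub (add a b) b = a"
proof -
  define q where "q = card A"
  obtain h where h: "bij_betw h A {0..<q}"
    using ex_bij_betw_finite_nat[OF assms(1)] unfolding q_def by blast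
  define g where "g = the_inv_into A h"
  have q: "0 < q" using assms unfolding q_def by (simp add: card_gt_0_iff)
  have h_less: "h a < q" if "a \<in> A" for a using h that by (auto dest: bij_betwE)
  have g_h: "g (h a) = a" if "a \<in> A" for a
    using h that unfolding g_def bij_betw_def by (simp add: the_inv_into_f_f)
  have g_in: "g n \<in> A" and h_g: "h (g n) = n" if "n < q" for n
    using h that unfolding g_def bij_betw_def
    by (auto intro: the_inv_into_into f_the_inv_into_f)
  define add where "add a b = g ((h a + h b) mod q)" for a b
  define sub where "sub c b = g ((h c + (q - h b)) mod q)" for c b
  show ?thesis
  proof
    show "add a b \<in> A" for a b unfolding add_def using q by (simp add: g_in)
    show "add a b = add b a" for a b unfolding add_def by (simp add: add.commute)
    show "sub (add a b) b = a" if "a \<in> A" "b \<in> A" for a b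
    proof -
      have "(h (add a b) + (q - h b)) mod q = (h a + (h b + (q - h b))) mod q"
        unfolding add_def using q by (simp add: h_g mod_add_left_eq add.assoc)
      also have "\<dots> = h a" using h_less[OF that(1)] h_less[OF that(2)] by simp
      finally show ?thesis unfolding sub_def using g_h[OF that(1)] by simp
    qed
  qed
qed

section \<open>The problem B*\<close>

lemma Wstar_Kstar:
  assumes "i \<in> {1..3}"
  shows "card (Wstar i) = 4" "Wstar i \<subseteq> {1..12}" "Wstar i \<inter> Kstar i = {}"
proof -
  have "i = 1 \<or> i = 2 \<or> i = 3" using assms by auto
  then show "card (Wstar i) = 4" "Wstar i \<subseteq> {1..12}" "Wstar i \<inter> Kstar i = {}"
    by (auto simp: Wstar_def Kstar_def)
qed

lemma Bstar_length_lower_bound: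
  assumes "finite A" "2 \<le> card A" "1 \<le> m"
    and code: "valid_index_code A 3 12 Wstar Kstar m l E R D"
    and locality: "\<forall>i\<in>{1..3}. locality_at m Wstar R i \<le> 1"
  shows "7 * m \<le> l"
proof -
  have rcv: "receiver A 12 m l E (R i) (D i) (Wstar i) (Kstar i)" if "i \<in> {1..3}" for i
    using receiver_of_valid_index_code[OF code assms(1,2) that] Wstar_Kstar[OF that] by blast
  have small: "card (R i) \<le> m * card (Wstar i)" if "i \<in> {1..3}" for i
    using locality that locality_at_le_1_iff[of m Wstar i R] Wstar_Kstar(1)[OF that] assms(3)
    by auto
  have shared: "depends_only_on (msgs A 12 m) E p S"
    if "i \<in> {1..3}" "j \<in> {1..3}" "p \<in> R i" "p \<in> R j"
      and "(Wstar i \<union> Kstar i) \<inter> (Wstar j \<union> Kstar j) \<subseteq> S" for i j p S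
    using shared_position_depends_only_on[OF rcv[OF that(1)] rcv[OF that(2)]
        small[OF that(1)] small[OF that(2)] that(3,4)] that(5)
    by (metis depends_only_on_mono)
  have "m * card (Wstar 1 - - {4}) \<le> card (R 1 - (R 2 \<union> R 3))"
  proof (rule receiver.card_demands_le_card_observed_diff[OF rcv])
    show "\<forall>p\<in>R 1 \<inter> (R 2 \<union> R 3). depends_only_on (msgs A 12 m) E p (- {4})"
      using shared[of 1 2] shared[of 1 3] by (auto simp: Wstar_def Kstar_def)
  qed auto
  then have r1: "m \<le> card (R 1 - (R 2 \<union> R 3))" by (simp add: Wstar_def)
  have "m * card (Wstar 2 - - {6, 8}) \<le> card (R 2 - R 3)"
  proof (rule receiver.card_demands_le_card_observed_diff[OF rcv])
    show "\<forall>p\<in>R 2 \<inter> R 3. depends_only_on (msgs A 12 m) E p (- {6, 8})"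
      using shared[of 2 3] by (auto simp: Wstar_def Kstar_def)
  qed auto
  then have r2: "2 * m \<le> card (R 2 - R 3)" by (simp add: Wstar_def)
  have "m * card (Wstar 3 - {}) \<le> card (R 3 - {})"
    by (rule receiver.card_demands_le_card_observed_diff[OF rcv]) auto
  then have r3: "4 * m \<le> card (R 3)" by (simp add: Wstar_def)
  have observed: "R i \<subseteq> {0..<l}" if "i \<in> {1..3}" for i
    using code that unfolding valid_index_code_def by blast
  then have "card (R 1 \<union> R 2 \<union> R 3) \<le> card {0..<l}"
    by (intro card_mono) auto
  moreover have "card (R 1 \<union> R 2 \<union> R 3) = card (R 1 - (R 2 \<union> R 3)) + card (R 2 - R 3) + card (R 3)"
    using observed[THEN finite_subset] by (intro card_Un3_eq_card_diffs) auto
  ultimately show ?thesis using r1 r2 r3 by simp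
qed

definition Bstar_codeword :: "('a \<Rightarrow> 'a \<Rightarrow> 'a) \<Rightarrow> (nat \<Rightarrow> 'a) \<Rightarrow> 'a list" where
  "Bstar_codeword add v =
     [add (add (v 1) (v 5)) (v 9), add (v 2) (v 6), add (v 3) (v 10), add (v 7) (v 11), v 4, v 8, v 12]"

definition Bstar_positions :: "nat \<Rightarrow> nat set" where
  "Bstar_positions i = (if i = 1 then {0, 1, 2, 4} else if i = 2 then {0, 1, 3, 5} else {0, 2, 3, 6})"

definition Bstar_decoder ::
  "('a \<Rightarrow> 'a \<Rightarrow> 'a) \<Rightarrow> ('a \<Rightarrow> 'a \<Rightarrow> 'a) \<Rightarrow> 'a list \<Rightarrow> (nat \<Rightarrow> 'a) \<Rightarrow> nat \<Rightarrow> 'a" where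
  "Bstar_decoder add sub c u j =
     (if j = 1 then sub (sub (c ! 0) (u 9)) (u 5) else if j = 2 then sub (c ! 1) (u 6)
      else if j = 3 then sub (c ! 2) (u 10) else if j = 5 then sub (sub (c ! 0) (u 9)) (u 1)
      else if j = 6 then sub (c ! 1) (u 2) else if j = 7 then sub (c ! 2) (u 11)
      else if j = 9 then sub (c ! 0) (add (u 1) (u 5)) else if j = 10 then sub (c ! 1) (u 3)
      else if j = 11 then sub (c ! 2) (u 7) else c ! 3)"

lemma Bstar_decoder_correct:
  assumes add_in: "\<And>a b. a \<in> A \<Longrightarrow> b \<in> A \<Longrightarrow> add a b \<in> A"
    and add_commute: "\<And>a b. add a b = add b a"
    and sub_add: "\<And>a b. a \<in> A \<Longrightarrow> b \<in> A \<Longrightarrow> sub (add a b) b = a"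
    and v: "\<And>j. j \<in> {1..12} \<Longrightarrow> v j \<in> A"
    and i: "i \<in> {1..3}" and j: "j \<in> Wstar i"
  shows "Bstar_decoder add sub (nths (Bstar_codeword add v) (Bstar_positions i))
      (\<lambda>k. if k \<in> Kstar i then v k else w k) j = v j"
proof -
  have sub_add': "sub (add a b) a = b" if "a \<in> A" "b \<in> A" for a b
    using sub_add[OF that(2,1)] by (simp add: add_commute)
  consider "i = 1" | "i = 2" | "i = 3" using i by fastforce
  then show ?thesis
    using j
    by cases (auto simp: Bstar_codeword_def Bstar_positions_def Bstar_decoder_def nths_Cons
        Wstar_def Kstar_def v add_in sub_add sub_add')
qed

lemma Bstar_code:
  assumes "finite A" "A \<noteq> {}"
  obtains E R D
  where "valid_index_code A 3 12 Wstar Kstar 1 7 E R D" "\<forall>i\<in>{1..3}. card (R i) = 4"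
proof -
  obtain add sub :: "'a \<Rightarrow> 'a \<Rightarrow> 'a"
    where add_in: "\<And>a b. a \<in> A \<Longrightarrow> b \<in> A \<Longrightarrow> add a b \<in> A"
      and add_commute: "\<And>a b. add a b = add b a"
      and sub_add: "\<And>a b. a \<in> A \<Longrightarrow> b \<in> A \<Longrightarrow> sub (add a b) b = a"
    using finite_set_cancellative_addition[OF assms] by blast
  define E where "E x = Bstar_codeword add (\<lambda>j. hd (x j))" for x :: "nat \<Rightarrow> 'a list"
  define D :: "nat \<Rightarrow> 'a list \<Rightarrow> (nat \<Rightarrow> 'a list) \<Rightarrow> nat \<Rightarrow> 'a list"
    where "D i c k j = [Bstar_decoder add sub c (\<lambda>j. hd (k j)) j]" for i c k j
  have "valid_index_code A 3 12 Wstar Kstar 1 7 E Bstar_positions D"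
    unfolding valid_index_code_def
  proof (intro conjI ballI)
    fix x assume "x \<in> msgs A 12 1"
    then have "hd (x j) \<in> A" if "j \<in> {1..12}" for j
      using that by (rule msgs_1D)
    then show "length (E x) = 7" "set (E x) \<subseteq> A"
      unfolding E_def Bstar_codeword_def by (simp_all add: add_in)
  next
    show "Bstar_positions i \<subseteq> {0..<7}" for i unfolding Bstar_positions_def by auto
  next
    fix i x j assume i: "i \<in> {1..3}" and x: "x \<in> msgs A 12 1" and j: "j \<in> Wstar i"
    have "j \<in> {1..12}" using Wstar_Kstar(2)[OF i] j by blast
    moreover have "Bstar_decoder add sub (nths (E x) (Bstar_positions i))
        (\<lambda>k. hd (restrict_msgs x (Kstar i) k)) j = hd (x j)"
      unfolding E_def restrict_msgs_def if_distrib[of hd]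
      using add_in add_commute sub_add msgs_1D(2)[OF x] i j by (rule Bstar_decoder_correct)
    ultimately show "D i (nths (E x) (Bstar_positions i)) (restrict_msgs x (Kstar i)) j = x j"
      unfolding D_def using msgs_1D(1)[OF x] by simp
  qed
  moreover have "\<forall>i\<in>{1..3}. card (Bstar_positions i) = 4" unfolding Bstar_positions_def by simp
  ultimately show ?thesis using that by blast
qed

lemma beta_star_Bstar:
  assumes "finite A" "2 \<le> card A"
  shows "beta_star A 3 12 Wstar Kstar 1 = 7"
proof -
  have "A \<noteq> {}" using assms(2) by auto
  with assms(1) obtain E R D where code: "valid_index_code A 3 12 Wstar Kstar 1 7 E R D"
    and card_R: "\<forall>i\<in>{1..3}. card (R i) = 4"
    by (rule Bstar_code)
  have locality: "\<forall>i\<in>{1..3}. locality_at 1 Wstar R i \<le> 1"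
    using card_R locality_at_le_1_iff[of 1 Wstar] Wstar_Kstar(1) by simp
  show ?thesis
  proof (rule beta_star_eqI[OF _ code locality])
    show "7 * real m \<le> real l"
      if "m \<ge> 1" "valid_index_code A 3 12 Wstar Kstar m l E R D"
        "\<forall>i\<in>{1..3}. locality_at m Wstar R i \<le> 1" for m l E R D
      using Bstar_length_lower_bound[OF assms that] by linarith
  qed simp_all
qed

section \<open>Clique covers\<close>

definition clique_cover_weight_sums :: "'v set \<Rightarrow> ('v \<Rightarrow> 'v \<Rightarrow> bool) \<Rightarrow> real set" where
  "clique_cover_weight_sums V Adj = {(\<Sum>C\<in>{C. is_clique V Adj C}. w C) | w.
      (\<forall>C. w C \<ge> 0) \<and> (\<forall>v\<in>V. (\<Sum>C\<in>{C. is_clique V Adj C \<and> v \<in> C}. w C) \<ge> 1)}"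

lemma frac_clique_cover_number_eq_Inf:
  "frac_clique_cover_number V Adj = Inf (clique_cover_weight_sums V Adj)"
  unfolding frac_clique_cover_number_def clique_cover_weight_sums_def ..

lemma bdd_below_clique_cover_weight_sums: "bdd_below (clique_cover_weight_sums V Adj)"
  unfolding clique_cover_weight_sums_def by (rule bdd_belowI[of _ 0]) (auto intro!: sum_nonneg)

lemma finite_cliques: "finite V \<Longrightarrow> finite {C. is_clique V Adj C}"
  unfolding is_clique_def by (rule finite_subset[of _ "Pow V"]) auto

lemma card_clique_cover_in_weight_sums:
  assumes "finite V" "finite \<C>" "\<forall>C\<in>\<C>. is_clique V Adj C" "\<Union>\<C> = V"
  shows "real (card \<C>) \<in> clique_cover_weight_sums V Adj"
proof -
  define w where "w C = (if C \<in> \<C> then 1 else 0 :: real)" for C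
  have covers: "1 \<le> (\<Sum>C\<in>{C. is_clique V Adj C \<and> v \<in> C}. w C)" if "v \<in> V" for v
  proof -
    obtain C where C: "C \<in> \<C>" "v \<in> C" using \<open>v \<in> V\<close> assms(4) by blast
    have "w C \<le> (\<Sum>C\<in>{C. is_clique V Adj C \<and> v \<in> C}. w C)"
      using C assms(3) finite_cliques[OF assms(1)]
      by (intro member_le_sum) (auto simp: w_def intro: finite_subset[rotated])
    then show ?thesis using C by (simp add: w_def)
  qed
  have "{C. is_clique V Adj C} \<inter> \<C> = \<C>" using assms(3) by blast
  then have "(\<Sum>C\<in>{C. is_clique V Adj C}. w C) = card \<C>"
    using finite_cliques[OF assms(1)] by (simp add: w_def sum.If_cases)
  with covers show ?thesis
    unfolding clique_cover_weight_sums_def by (auto simp: w_def intro!: exI[of _ w])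
qed

lemma singleton_clique_cover:
  "finite V \<Longrightarrow> finite ((\<lambda>v. {v}) ` V) \<and> (\<forall>C\<in>(\<lambda>v. {v}) ` V. is_clique V Adj C)
     \<and> \<Union>((\<lambda>v. {v}) ` V) = V"
  unfolding is_clique_def by blast

lemma frac_clique_cover_number_le_clique_cover_number:
  assumes "finite V"
  shows "frac_clique_cover_number V Adj \<le> clique_cover_number V Adj"
proof -
  have "\<exists>\<C>. finite \<C> \<and> card \<C> = clique_cover_number V Adj \<and>
          (\<forall>C\<in>\<C>. is_clique V Adj C) \<and> \<Union>\<C> = V"
    unfolding clique_cover_number_def
    by (rule LeastI_ex) (use singleton_clique_cover[OF assms] in blast)
  then obtain \<C> where cover: "finite \<C>" "\<forall>C\<in>\<C>. is_clique V Adj C" "\<Union>\<C> = V"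
    and card: "card \<C> = clique_cover_number V Adj"
    by blast
  have "real (clique_cover_number V Adj) \<in> clique_cover_weight_sums V Adj"
    using card_clique_cover_in_weight_sums[OF assms cover] unfolding card .
  then show ?thesis
    unfolding frac_clique_cover_number_eq_Inf
    using bdd_below_clique_cover_weight_sums by (rule cInf_lower)
qed

lemma sum_le_frac_clique_cover_number:
  fixes y :: "'v \<Rightarrow> real"
  assumes "finite V" and nonneg: "\<forall>v\<in>V. 0 \<le> y v"
    and clique_sum: "\<And>C. is_clique V Adj C \<Longrightarrow> (\<Sum>v\<in>C. y v) \<le> 1"
  shows "(\<Sum>v\<in>V. y v) \<le> frac_clique_cover_number V Adj"
  unfolding frac_clique_cover_number_eq_Inf
proof (rule cInf_greatest)
  show "clique_cover_weight_sums V Adj \<noteq> {}"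
    using card_clique_cover_in_weight_sums[OF assms(1)] singleton_clique_cover[OF assms(1)] by blast
next
  fix s assume "s \<in> clique_cover_weight_sums V Adj"
  then obtain w where s: "s = (\<Sum>C\<in>{C. is_clique V Adj C}. w C)" and w_nonneg: "\<forall>C. w C \<ge> 0"
    and covers: "\<forall>v\<in>V. (\<Sum>C\<in>{C. is_clique V Adj C \<and> v \<in> C}. w C) \<ge> 1"
    unfolding clique_cover_weight_sums_def by blast
  let ?cliques = "{C. is_clique V Adj C}"
  have "(\<Sum>v\<in>V. y v) \<le> (\<Sum>v\<in>V. y v * (\<Sum>C\<in>{C \<in> ?cliques. v \<in> C}. w C))"
    using nonneg covers by (intro sum_mono) (simp add: mult_le_cancel_left1 less_le_not_le)
  also have "\<dots> = (\<Sum>C\<in>?cliques. \<Sum>v\<in>{v \<in> V. v \<in> C}. y v * w C)"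
    using sum.swap_restrict[OF assms(1) finite_cliques[OF assms(1)],
        where g = "\<lambda>v C. y v * w C" and R = "\<lambda>v C. v \<in> C"]
    by (simp add: sum_distrib_left)
  also have "\<dots> = (\<Sum>C\<in>?cliques. w C * (\<Sum>v\<in>C. y v))"
  proof (rule sum.cong[OF refl])
    fix C assume "C \<in> ?cliques"
    then have "{v \<in> V. v \<in> C} = C" unfolding is_clique_def by blast
    then show "(\<Sum>v\<in>{v \<in> V. v \<in> C}. y v * w C) = w C * (\<Sum>v\<in>C. y v)"
      by (simp add: sum_distrib_left mult.commute)
  qed
  also have "\<dots> \<le> (\<Sum>C\<in>?cliques. w C)"
    using w_nonneg clique_sum by (intro sum_mono) (simp add: mult_left_le)
  finally show "(\<Sum>v\<in>V. y v) \<le> s" unfolding s .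
qed

lemma clique_cases_of_unique_triangle:
  assumes clique: "is_clique V Adj C"
    and triangle: "\<And>a b c. Adj a b \<Longrightarrow> Adj a c \<Longrightarrow> Adj b c \<Longrightarrow> {a, b, c} = T"
  obtains a where "C = {a}" | a b where "a \<noteq> b" "Adj a b" "C = {a, b}" | "C = T"
proof -
  have adj: "Adj a b" if "a \<in> C" "b \<in> C" "a \<noteq> b" for a b
    using clique that unfolding is_clique_def by blast
  obtain a where a: "a \<in> C" using clique unfolding is_clique_def by blast
  consider "C = {a}" | b where "b \<in> C" "b \<noteq> a" "C = {a, b}"
    | b c where "b \<in> C" "c \<in> C" "b \<noteq> a" "c \<noteq> a" "c \<noteq> b"
    using a by blast
  then show ?thesis
  proof cases
    case (3 b c)
    have abc: "{a, b, c} = T" by (rule triangle) (use adj 3 a in blast)+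
    moreover have "d \<in> {a, b, c}" if "d \<in> C" for d
    proof (rule ccontr)
      assume "d \<notin> {a, b, c}"
      moreover have "{a, b, d} = T" by (rule triangle) (use adj 3 a that \<open>d \<notin> {a, b, c}\<close> in blast)+
      ultimately show False using abc by blast
    qed
    ultimately have "C = T" using a 3 by blast
    then show ?thesis using that by blast
  qed (use that adj a in blast)+
qed

definition Gstar_u_nbrs :: "nat \<Rightarrow> nat set" where
  "Gstar_u_nbrs a =
     (if a = 1 then {5,6,9,10} else if a = 2 then {5,6} else if a = 3 then {9,10}
      else if a = 5 then {1,2,9,11} else if a = 6 then {1,2} else if a = 7 then {9,11}
      else if a = 9 then {1,3,5,7} else if a = 10 then {1,3} else if a = 11 then {5,7} else {})"

lemma Gstar_u_adj_iff: "Gstar_u_adj a b \<longleftrightarrow> b \<in> Gstar_u_nbrs a"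
proof -
  have "{1..3::nat} = {1,2,3}" by auto
  then show ?thesis
    unfolding Gstar_u_adj_def Gstar_edge_def Wstar_def Kstar_def Gstar_u_nbrs_def by auto
qed

lemma Gstar_u_triangle:
  assumes "Gstar_u_adj a b" "Gstar_u_adj a c" "Gstar_u_adj b c"
  shows "{a, b, c} = {1, 5, 9}"
  using assms unfolding Gstar_u_adj_iff Gstar_u_nbrs_def by (auto split: if_splits)

lemma atLeastAtMost_1_12: "{1..12::nat} = {1,2,3,4,5,6,7,8,9,10,11,12}"
  by (auto simp: eval_nat_numeral le_Suc_eq)

definition Gstar_u_clique_cover :: "nat set set" where
  "Gstar_u_clique_cover = {{1,5,9}, {2,6}, {3,10}, {7,11}, {4}, {8}, {12}}"

lemma Gstar_u_clique_cover:
  "finite Gstar_u_clique_cover" "card Gstar_u_clique_cover = 7"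
  "\<forall>C\<in>Gstar_u_clique_cover. is_clique {1..12} Gstar_u_adj C" "\<Union>Gstar_u_clique_cover = {1..12}"
proof -
  show "finite Gstar_u_clique_cover" "card Gstar_u_clique_cover = 7"
    unfolding Gstar_u_clique_cover_def by (simp_all add: insert_eq_iff)
  show "\<forall>C\<in>Gstar_u_clique_cover. is_clique {1..12} Gstar_u_adj C"
    unfolding Gstar_u_clique_cover_def is_clique_def Gstar_u_adj_iff atLeastAtMost_1_12
    by (simp add: Gstar_u_nbrs_def)
  show "\<Union>Gstar_u_clique_cover = {1..12}"
    unfolding Gstar_u_clique_cover_def atLeastAtMost_1_12 by auto
qed

definition Gstar_u_frac_independent_set :: "nat \<Rightarrow> real" where
  "Gstar_u_frac_independent_set v = (if v \<in> {4,8,12} then 1 else if v \<in> {1,5,9} then 1/3 else 1/2)"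

lemma Gstar_u_frac_independent_set_clique_sum:
  assumes "is_clique {1..12} Gstar_u_adj C"
  shows "(\<Sum>v\<in>C. Gstar_u_frac_independent_set v) \<le> 1"
proof (rule clique_cases_of_unique_triangle[OF assms])
  show "{a, b, c} = {1, 5, 9}" if "Gstar_u_adj a b" "Gstar_u_adj a c" "Gstar_u_adj b c" for a b c
    using that by (rule Gstar_u_triangle)
next
  show ?thesis if "C = {a}" for a
    using that by (simp add: Gstar_u_frac_independent_set_def)
next
  show ?thesis if "a \<noteq> b" "Gstar_u_adj a b" "C = {a, b}" for a b
    using that unfolding Gstar_u_adj_iff
    by (auto simp: Gstar_u_nbrs_def Gstar_u_frac_independent_set_def split: if_splits)
next
  show ?thesis if "C = {1, 5, 9}"
    using that by (simp add: Gstar_u_frac_independent_set_def)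
qed

lemma Gstar_u_frac_independent_set_sum: "(\<Sum>v\<in>{1..12}. Gstar_u_frac_independent_set v) = 7"
  unfolding atLeastAtMost_1_12 by (simp add: Gstar_u_frac_independent_set_def)

theorem theorem5:
  fixes A :: "'a set"
  assumes "finite A" and "card A \<ge> 2"
  shows "beta_star A 3 12 Wstar Kstar 1 = frac_clique_cover_number {1..12::nat} Gstar_u_adj
       \<and> frac_clique_cover_number {1..12::nat} Gstar_u_adj
           = real (clique_cover_number {1..12::nat} Gstar_u_adj)
       \<and> clique_cover_number {1..12::nat} Gstar_u_adj = 7"
proof -
  have "7 \<le> frac_clique_cover_number {1..12::nat} Gstar_u_adj"
    using sum_le_frac_clique_cover_number[of "{1..12}" Gstar_u_frac_independent_set Gstar_u_adj]
      Gstar_u_frac_independent_set_clique_sum Gstar_u_frac_independent_set_sum by (simp add: Gstar_u_frac_independent_set_def)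
  moreover have "frac_clique_cover_number {1..12::nat} Gstar_u_adj
      \<le> clique_cover_number {1..12::nat} Gstar_u_adj"
    by (rule frac_clique_cover_number_le_clique_cover_number) simp
  moreover have "clique_cover_number {1..12::nat} Gstar_u_adj \<le> 7"
    unfolding clique_cover_number_def using Gstar_u_clique_cover by (intro Least_le) blast
  ultimately show ?thesis using beta_star_Bstar[OF assms] by linarith
qed
end
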